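(* Let $A,B\in\mathcal{M}_{n\times n}$ with $A\neq 0$. Then the following are equivalent: (i) $A\parallel B$ in the operator norm $\|\cdot\|_\infty$; (ii) there exist unit vectors $x,y\in\mathcal{M}_{n\times 1}$ such that $\|A\|_\infty = x^*Ay$ and $|x^*By|=\|B\|_\infty$; (iii) for any matrix $U\in\mathcal{M}_{n\times k}$ whose orthonormal columns form a basis of the eigenspace of $AA^*$ corresponding to its largest eigenvalue, with $V=\frac{1}{\|A\|_\infty}A^*U\in\mathcal{M}_{n\times k}$, one has $-\|B\|_\infty\in W(\lambda U^*BV)$ for some $\lambda\in\mathbb{T}$.
   Context: $\mathcal{M}_{m\times n}$ denotes complex $m\times n$ matrices; $\|A\|_\infty$ is the largest singular value of $A$ (operator norm). $\mathbb{T}=\{\alpha\in\mathbb{C}:|\alpha|=1\}$. $A\parallel B$ in a norm $\|\cdot\|$ means $\|A+\lambda B\|=\|A\|+\|B\|$ for some $\lambda\in\mathbb{T}$. For a square matrix $T\in\mathcal{M}_{k\times k}$, $W(T)=\{\zeta^*T\zeta:\zeta\in\mathcal{M}_{k\times 1},\ \|\zeta\|=1\}$ is its numerical range. *)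

theory Defs
  imports Complex_Main "Jordan_Normal_Form.Char_Poly"
begin

text \<open>Complex matrices are rendered as Jordan_Normal_Form matrices of type complex mat,
  with explicit dimensions; column vectors in M_{m x 1} are complex vec.\<close>

definition vnorm :: "complex vec \<Rightarrow> real" where
  "vnorm v = sqrt (\<Sum>i<dim_vec v. (cmod (v $ i))\<^sup>2)"

definition adj :: "complex mat \<Rightarrow> complex mat" where
  "adj A = mat (dim_col A) (dim_row A) (\<lambda>(i, j). cnj (A $$ (j, i)))"

definition opnorm :: "complex mat \<Rightarrow> real" where
  "opnorm A = Sup {vnorm (A *\<^sub>v x) | x. x \<in> carrier_vec (dim_col A) \<and> vnorm x = 1}"

definition sform :: "complex vec \<Rightarrow> complex mat \<Rightarrow> complex vec \<Rightarrow> complex" where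
  "sform x M y = (\<Sum>i<dim_vec x. cnj (x $ i) * (M *\<^sub>v y) $ i)"

definition numerical_range :: "complex mat \<Rightarrow> complex set" where
  "numerical_range T = {sform z T z | z. z \<in> carrier_vec (dim_col T) \<and> vnorm z = 1}"

definition opnorm_parallel :: "complex mat \<Rightarrow> complex mat \<Rightarrow> bool" where
  "opnorm_parallel A B = (\<exists>l. cmod l = 1 \<and> opnorm (A + l \<cdot>\<^sub>m B) = opnorm A + opnorm B)"

text \<open>Largest eigenvalue of a (Hermitian) matrix, whose eigenvalues are real.\<close>
definition largest_eigenvalue :: "complex mat \<Rightarrow> real" where
  "largest_eigenvalue M = Max (Re ` {e. eigenvalue M e})"

definition eigenspace :: "complex mat \<Rightarrow> complex \<Rightarrow> complex vec set" where
  "eigenspace M e = {v \<in> carrier_vec (dim_row M). M *\<^sub>v v = e \<cdot>\<^sub>v v}"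

definition orthonormal_basis_mat :: "complex mat \<Rightarrow> complex vec set \<Rightarrow> bool" where
  "orthonormal_basis_mat U S =
     (adj U * U = 1\<^sub>m (dim_col U) \<and> {U *\<^sub>v c | c. c \<in> carrier_vec (dim_col U)} = S)"

end

theory Submission
  imports Defs "Jordan_Normal_Form.Gram_Schmidt" "Jordan_Normal_Form.Matrix_Kernel"
    "HOL-Analysis.Function_Topology" "HOL-Analysis.Elementary_Metric_Spaces"
    "HOL-Analysis.L2_Norm"
begin

(* Call unit vectors x, y a norming pair of A if x^*Ay = ||A||. If ||A + lB|| = ||A|| + ||B||, take
   a norming pair of A + lB: since |x^*Ay| <= ||A|| and |x^*By| <= ||B||, the identity
   x^*Ay + l x^*By = ||A|| + ||B|| forces x^*Ay = ||A|| and |x^*By| = ||B||. Conversely such x, y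
   give ||A + lB|| >= ||A|| + ||B|| for the phase l with l x^*By = ||B||.
   By the equality case of Cauchy-Schwarz, x^*Ay = ||A|| means Ay = ||A|| x and A^*x = ||A|| y;
   so the norming pairs of A are exactly the pairs (x, A^*x/||A||) with x a unit vector in the
   eigenspace of AA^* for its largest eigenvalue ||A||^2. Writing x = Uz turns A^*x/||A|| into Vz
   and x^*By into z^*U^*BVz, which makes (ii) and (iii) the same condition up to the phase. *)

section \<open>Inner product, norm and adjoint\<close>

definition cinner :: "complex vec \<Rightarrow> complex vec \<Rightarrow> complex" where
  "cinner x y = (\<Sum>i<dim_vec x. cnj (x $ i) * y $ i)"

lemma sform_eq_cinner: "sform x M y = cinner x (M *\<^sub>v y)"
  by (simp add: sform_def cinner_def)

lemma cinner_eq_cscalar_prod: "x \<in> carrier_vec n \<Longrightarrow> y \<in> carrier_vec n \<Longrightarrow> cinner x y = y \<bullet>c x"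
  unfolding cinner_def scalar_prod_def by (auto simp: mult.commute atLeast0LessThan intro: sum.cong)

lemma vnorm_eq_L2_set: "vnorm v = L2_set (\<lambda>i. cmod (v $ i)) {..<dim_vec v}"
  by (simp add: vnorm_def L2_set_def)

lemma vnorm_nonneg: "0 \<le> vnorm v"
  by (simp add: vnorm_def sum_nonneg)

lemma vnorm_power2: "(vnorm v)\<^sup>2 = (\<Sum>i<dim_vec v. (cmod (v $ i))\<^sup>2)"
  unfolding vnorm_def by (simp add: sum_nonneg)

lemma cinner_self: "cinner v v = complex_of_real ((vnorm v)\<^sup>2)"
  unfolding cinner_def vnorm_power2 of_real_sum
  by (rule sum.cong) (simp_all only: complex_norm_square mult.commute)

lemma vnorm_zero_vec [simp]: "vnorm (0\<^sub>v n) = 0"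
  by (simp add: vnorm_def)

lemma vnorm_eq_0_iff: assumes "v \<in> carrier_vec n" shows "vnorm v = 0 \<longleftrightarrow> v = 0\<^sub>v n"
proof
  assume "vnorm v = 0"
  hence "\<forall>i\<in>{..<dim_vec v}. (cmod (v $ i))\<^sup>2 = 0"
    using vnorm_power2[of v] by (subst sum_nonneg_eq_0_iff[symmetric]) auto
  thus "v = 0\<^sub>v n" using assms by (intro eq_vecI) auto
qed simp

lemma vnorm_smult: "vnorm (c \<cdot>\<^sub>v v) = cmod c * vnorm v"
proof -
  have "vnorm (c \<cdot>\<^sub>v v) = L2_set (\<lambda>i. cmod c * cmod (v $ i)) {..<dim_vec v}"
    unfolding vnorm_eq_L2_set by (intro L2_set_cong) (auto simp: norm_mult)
  thus ?thesis unfolding vnorm_eq_L2_set by (simp add: L2_set_right_distrib)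
qed

lemma vnorm_add_le:
  assumes "x \<in> carrier_vec n" "y \<in> carrier_vec n"
  shows "vnorm (x + y) \<le> vnorm x + vnorm y"
proof -
  have "vnorm (x + y) = L2_set (\<lambda>i. cmod (x $ i + y $ i)) {..<n}"
    using assms unfolding vnorm_eq_L2_set by (intro L2_set_cong) auto
  also have "\<dots> \<le> L2_set (\<lambda>i. cmod (x $ i) + cmod (y $ i)) {..<n}"
    by (intro L2_set_mono norm_triangle_ineq) auto
  also have "\<dots> \<le> L2_set (\<lambda>i. cmod (x $ i)) {..<n} + L2_set (\<lambda>i. cmod (y $ i)) {..<n}"
    by (rule L2_set_triangle_ineq)
  finally show ?thesis using assms unfolding vnorm_eq_L2_set by simp
qed

lemma cmod_cinner_le:
  assumes "x \<in> carrier_vec n" "y \<in> carrier_vec n"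
  shows "cmod (cinner x y) \<le> vnorm x * vnorm y"
proof -
  have "cmod (cinner x y) \<le> (\<Sum>i<n. cmod (cnj (x $ i) * y $ i))"
    unfolding cinner_def using assms by (simp add: norm_sum)
  also have "\<dots> = (\<Sum>i<n. \<bar>cmod (x $ i)\<bar> * \<bar>cmod (y $ i)\<bar>)"
    by (simp add: norm_mult)
  also have "\<dots> \<le> L2_set (\<lambda>i. cmod (x $ i)) {..<n} * L2_set (\<lambda>i. cmod (y $ i)) {..<n}"
    by (rule L2_set_mult_ineq)
  finally show ?thesis using assms unfolding vnorm_eq_L2_set by simp
qed

lemma cinner_add_right:
  "x \<in> carrier_vec n \<Longrightarrow> y \<in> carrier_vec n \<Longrightarrow> z \<in> carrier_vec n \<Longrightarrow>
    cinner x (y + z) = cinner x y + cinner x z"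
  unfolding cinner_def by (simp add: distrib_left sum.distrib)

lemma cinner_diff_right:
  "x \<in> carrier_vec n \<Longrightarrow> y \<in> carrier_vec n \<Longrightarrow> z \<in> carrier_vec n \<Longrightarrow>
    cinner x (y - z) = cinner x y - cinner x z"
  unfolding cinner_def by (simp add: right_diff_distrib sum_subtractf)

lemma cinner_diff_left:
  "x \<in> carrier_vec n \<Longrightarrow> y \<in> carrier_vec n \<Longrightarrow> z \<in> carrier_vec n \<Longrightarrow>
    cinner (y - z) x = cinner y x - cinner z x"
  unfolding cinner_def by (simp add: left_diff_distrib sum_subtractf)

lemma cinner_smult_right: "y \<in> carrier_vec (dim_vec x) \<Longrightarrow> cinner x (c \<cdot>\<^sub>v y) = c * cinner x y"
  unfolding cinner_def by (simp add: sum_distrib_left mult_ac)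

lemma cinner_smult_left: "cinner (c \<cdot>\<^sub>v x) y = cnj c * cinner x y"
  unfolding cinner_def by (simp add: sum_distrib_left mult_ac)

lemma cinner_commute: "x \<in> carrier_vec n \<Longrightarrow> y \<in> carrier_vec n \<Longrightarrow> cinner y x = cnj (cinner x y)"
  unfolding cinner_def by (simp add: cnj_sum mult.commute)

lemma adj_carrier_mat [simp]: "A \<in> carrier_mat m n \<Longrightarrow> adj A \<in> carrier_mat n m"
  by (simp add: adj_def)

lemma adj_dim [simp]: "dim_row (adj A) = dim_col A" "dim_col (adj A) = dim_row A"
  by (simp_all add: adj_def)

lemma adj_index [simp]: "i < dim_col A \<Longrightarrow> j < dim_row A \<Longrightarrow> adj A $$ (i, j) = cnj (A $$ (j, i))"
  by (simp add: adj_def)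

lemma adj_adj [simp]: "adj (adj A) = A"
  by (intro eq_matI) auto

lemma cinner_adj:
  assumes A: "A \<in> carrier_mat m n" and x: "x \<in> carrier_vec m" and y: "y \<in> carrier_vec n"
  shows "cinner x (A *\<^sub>v y) = cinner (adj A *\<^sub>v x) y"
proof -
  have "cinner x (A *\<^sub>v y) = (\<Sum>i<m. \<Sum>j<n. cnj (x $ i) * A $$ (i, j) * y $ j)"
    using A x y by (simp add: cinner_def mult_mat_vec_def scalar_prod_def sum_distrib_left
        atLeast0LessThan mult.assoc)
  also have "\<dots> = (\<Sum>j<n. \<Sum>i<m. cnj (x $ i) * A $$ (i, j) * y $ j)"
    by (rule sum.swap)
  also have "\<dots> = cinner (adj A *\<^sub>v x) y"
    using A x y by (simp add: cinner_def mult_mat_vec_def scalar_prod_def sum_distrib_right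
        sum_distrib_left atLeast0LessThan cnj_sum mult_ac)
  finally show ?thesis .
qed

lemma cinner_isometry:
  assumes U: "U \<in> carrier_mat m k" and UU: "adj U * U = 1\<^sub>m k"
    and c: "c \<in> carrier_vec k" and d: "d \<in> carrier_vec k"
  shows "cinner (U *\<^sub>v c) (U *\<^sub>v d) = cinner c d"
proof -
  have "cinner (U *\<^sub>v c) (U *\<^sub>v d) = cinner (adj U *\<^sub>v (U *\<^sub>v c)) d"
    using cinner_adj[OF U _ d] U c by simp
  also have "adj U *\<^sub>v (U *\<^sub>v c) = c"
    using assoc_mult_mat_vec[OF adj_carrier_mat[OF U] U c] UU c by simp
  finally show ?thesis .
qed

lemma vnorm_isometry:
  assumes "U \<in> carrier_mat m k" "adj U * U = 1\<^sub>m k" "c \<in> carrier_vec k"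
  shows "vnorm (U *\<^sub>v c) = vnorm c"
proof -
  have "(vnorm (U *\<^sub>v c))\<^sup>2 = (vnorm c)\<^sup>2"
    using cinner_isometry[OF assms assms(3)] unfolding cinner_self of_real_eq_iff .
  thus ?thesis using vnorm_nonneg power2_eq_iff_nonneg by blast
qed
section \<open>The operator norm\<close>

(* A vector of dimension n is represented by its coefficient function extended by 0, which puts
   the unit sphere into the product space nat \<Rightarrow> complex, where Tychonoff (compactin_PiE) applies. *)
lemma compact_unit_sphere_coeffs:
  "compact {f :: nat \<Rightarrow> complex. (\<forall>i\<ge>n. f i = 0) \<and> (\<Sum>i<n. (cmod (f i))\<^sup>2) = 1}"
    (is "compact ?S")
proof -
  define D where
    "D = (\<lambda>p. complex_of_real (fst p) + \<i> * complex_of_real (snd p)) ` ({-1..1} \<times> {-1..1})"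
  define K where "K = PiE UNIV (\<lambda>i. if i < n then D else {0})"
  have "compact D"
    unfolding D_def by (intro compact_continuous_image compact_Times compact_Icc continuous_intros)
  hence "compactin (product_topology (\<lambda>i. euclidean) UNIV) K"
    unfolding K_def compactin_PiE by (auto simp: compactin_euclidean_iff)
  hence "compact K"
    by (simp add: euclidean_product_topology compactin_euclidean_iff)
  moreover have "closed {f :: nat \<Rightarrow> complex. (\<Sum>i<n. (cmod (f i))\<^sup>2) = 1}"
    by (intro closed_Collect_eq continuous_intros continuous_on_product_coordinates)
  moreover have "?S = K \<inter> {f. (\<Sum>i<n. (cmod (f i))\<^sup>2) = 1}"
  proof -
    have "f i \<in> D" if "f \<in> ?S" "i < n" for f i
    proof -
      have "(cmod (f i))\<^sup>2 \<le> (\<Sum>i<n. (cmod (f i))\<^sup>2)"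
        by (rule member_le_sum) (use that in auto)
      hence "cmod (f i) \<le> 1" using that by (simp add: power_le_one_iff abs_le_square_iff)
      hence "\<bar>Re (f i)\<bar> \<le> 1" "\<bar>Im (f i)\<bar> \<le> 1"
        using abs_Re_le_cmod[of "f i"] abs_Im_le_cmod[of "f i"] by linarith+
      thus ?thesis unfolding D_def
        by (intro image_eqI[of _ _ "(Re (f i), Im (f i))"]) (auto simp: complex_eq_iff)
    qed
    thus ?thesis unfolding K_def by (auto simp: PiE_iff not_less) (metis not_le singletonD)
  qed
  ultimately show ?thesis by (simp add: compact_Int_closed)
qed

lemma vnorm_unit_vec: "j < n \<Longrightarrow> vnorm (unit_vec n j) = 1"
proof -
  assume j: "j < n"
  have "(\<Sum>i<n. (cmod (unit_vec n j $ i))\<^sup>2) = (\<Sum>i<n. if i = j then 1 else 0)"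
    by (rule sum.cong) (auto simp: unit_vec_def)
  thus ?thesis using j by (simp add: vnorm_def)
qed

lemma opnorm_attained:
  assumes M: "M \<in> carrier_mat m n" and n: "0 < n"
  shows "\<exists>y\<in>carrier_vec n. vnorm y = 1 \<and> vnorm (M *\<^sub>v y) = opnorm M \<and>
           (\<forall>x\<in>carrier_vec n. vnorm x = 1 \<longrightarrow> vnorm (M *\<^sub>v x) \<le> opnorm M)"
proof -
  define S where "S = {f :: nat \<Rightarrow> complex. (\<forall>i\<ge>n. f i = 0) \<and> (\<Sum>i<n. (cmod (f i))\<^sup>2) = 1}"
  define g where "g f = vnorm (M *\<^sub>v vec n f)" for f
  have sphere: "x \<in> carrier_vec n \<Longrightarrow> vnorm x = 1 \<longleftrightarrow> (\<lambda>i. if i < n then x $ i else 0) \<in> S" for x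
    by (auto simp: S_def vnorm_def)
  hence "S \<noteq> {}"
    using vnorm_unit_vec[OF n] unit_vec_carrier by blast
  moreover have "continuous_on S g"
  proof -
    have "g = (\<lambda>f. sqrt (\<Sum>i<m. (cmod (\<Sum>j<n. M $$ (i, j) * f j))\<^sup>2))"
      using M by (auto simp: g_def vnorm_def mult_mat_vec_def scalar_prod_def atLeast0LessThan
          intro!: ext sum.cong)
    thus ?thesis
      by (simp add: continuous_intros continuous_on_subset[OF continuous_on_product_coordinates])
  qed
  ultimately obtain f0 where f0: "f0 \<in> S" "\<And>f. f \<in> S \<Longrightarrow> g f \<le> g f0"
    using continuous_attains_sup[OF compact_unit_sphere_coeffs[of n, folded S_def]] by blast
  have bound: "vnorm (M *\<^sub>v x) \<le> g f0" if "x \<in> carrier_vec n" "vnorm x = 1" for x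
  proof -
    have "vec n (\<lambda>i. if i < n then x $ i else 0) = x" using that(1) by auto
    thus ?thesis using f0(2)[of "\<lambda>i. if i < n then x $ i else 0"] that sphere by (simp add: g_def)
  qed
  have y: "vec n f0 \<in> carrier_vec n" "vnorm (vec n f0) = 1"
    using f0(1) by (auto simp: S_def vnorm_def)
  have "opnorm M = g f0"
    unfolding opnorm_def using M y bound by (intro cSup_eq_maximum) (auto simp: g_def)
  thus ?thesis using y bound by (auto simp: g_def)
qed

lemma opnorm_bound:
  assumes M: "M \<in> carrier_mat m n" and x: "x \<in> carrier_vec n"
  shows "vnorm (M *\<^sub>v x) \<le> opnorm M * vnorm x"
proof (cases "x = 0\<^sub>v n")
  case True
  hence "M *\<^sub>v x = 0\<^sub>v m" using M by (auto intro!: eq_vecI)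
  thus ?thesis using True by simp
next
  case False
  hence r: "0 < vnorm x" using vnorm_eq_0_iff[OF x] vnorm_nonneg[of x] by linarith
  have "0 < n" using False x by (cases n) auto
  hence unit_bound: "\<forall>x\<in>carrier_vec n. vnorm x = 1 \<longrightarrow> vnorm (M *\<^sub>v x) \<le> opnorm M"
    using opnorm_attained[OF M] by blast
  have "vnorm (complex_of_real (1 / vnorm x) \<cdot>\<^sub>v x) = 1"
    using r by (simp add: vnorm_smult norm_divide)
  hence "vnorm (M *\<^sub>v (complex_of_real (1 / vnorm x) \<cdot>\<^sub>v x)) \<le> opnorm M"
    using unit_bound x by simp
  thus ?thesis using r M x by (simp add: mult_mat_vec vnorm_smult norm_divide field_simps)
qed

(* For n = 0 the set in opnorm_def is empty and opnorm is the unspecified Sup {}. *)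
lemma opnorm_nonneg: "M \<in> carrier_mat m n \<Longrightarrow> 0 < n \<Longrightarrow> 0 \<le> opnorm M"
  using opnorm_attained vnorm_nonneg by metis

lemma nonzero_mat_entry:
  assumes "A \<in> carrier_mat m n" "A \<noteq> 0\<^sub>m m n"
  obtains i j where "i < m" "j < n" "A $$ (i, j) \<noteq> 0"
  using assms by (metis eq_matI carrier_matD index_zero_mat)

lemma opnorm_pos:
  assumes A: "A \<in> carrier_mat m n" and "A \<noteq> 0\<^sub>m m n"
  shows "0 < opnorm A"
proof -
  obtain i j where ij: "i < m" "j < n" "A $$ (i, j) \<noteq> 0"
    using nonzero_mat_entry assms by blast
  have "cmod ((A *\<^sub>v unit_vec n j) $ i) \<le> vnorm (A *\<^sub>v unit_vec n j)"
    unfolding vnorm_eq_L2_set by (rule member_le_L2_set) (use A ij in auto)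
  also have "\<dots> \<le> opnorm A * vnorm (unit_vec n j)"
    by (rule opnorm_bound[OF A]) simp
  also have "vnorm (unit_vec n j) = 1"
    using ij by (simp add: vnorm_unit_vec)
  finally have "cmod (A $$ (i, j)) \<le> opnorm A" using A ij by simp
  thus ?thesis using ij(3) by (meson zero_less_norm_iff less_le_trans)
qed

lemma adj_opnorm_bound:
  assumes A: "A \<in> carrier_mat m n" and x: "x \<in> carrier_vec m" and n: "0 < n"
  shows "vnorm (adj A *\<^sub>v x) \<le> opnorm A * vnorm x"
proof -
  define z where "z = adj A *\<^sub>v x"
  have z: "z \<in> carrier_vec n" using A x by (metis z_def adj_carrier_mat mult_mat_vec_carrier)
  have "(vnorm z)\<^sup>2 = Re (cinner x (A *\<^sub>v z))"
    using cinner_adj[OF A x z] by (simp add: z_def cinner_self del: of_real_power)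
  also have "\<dots> \<le> vnorm x * vnorm (A *\<^sub>v z)"
    using cmod_cinner_le[of x m "A *\<^sub>v z"] complex_Re_le_cmod A x z
    by (meson mult_mat_vec_carrier order_trans)
  also have "\<dots> \<le> vnorm x * (opnorm A * vnorm z)"
    by (intro mult_left_mono opnorm_bound[OF A z] vnorm_nonneg)
  finally have "vnorm z * vnorm z \<le> vnorm z * (opnorm A * vnorm x)"
    by (simp add: power2_eq_square mult_ac)
  moreover have "0 \<le> opnorm A * vnorm x"
    using opnorm_nonneg[OF A n] vnorm_nonneg by simp
  ultimately show ?thesis
    using vnorm_nonneg[of z] unfolding z_def[symmetric]
    by (metis mult_le_cancel_left_pos order_le_less)
qed

lemma cmod_sform_le_opnorm:
  assumes M: "M \<in> carrier_mat m n" and x: "x \<in> carrier_vec m" and y: "y \<in> carrier_vec n"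
    and "vnorm x = 1" "vnorm y = 1"
  shows "cmod (sform x M y) \<le> opnorm M"
  using cmod_cinner_le[OF x mult_mat_vec_carrier[OF M y]] opnorm_bound[OF M y] assms
  by (simp add: sform_eq_cinner)
section \<open>Norming pairs and parallelism\<close>

lemma unimodular_rotation: "\<exists>l. cmod l = 1 \<and> l * t = complex_of_real (cmod t)"
proof (cases "t = 0")
  case False
  have "cnj t * t = complex_of_real (cmod t) * complex_of_real (cmod t)"
    by (metis complex_norm_square mult.commute of_real_mult power2_eq_square)
  hence "cnj t / complex_of_real (cmod t) * t = complex_of_real (cmod t)"
    using False by simp
  moreover have "cmod (cnj t / complex_of_real (cmod t)) = 1"
    using False by (simp add: norm_divide)
  ultimately show ?thesis by blast
qed (intro exI[of _ 1], simp)

lemma add_eq_sum_of_norm_bounds: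
  fixes s t l :: complex
  assumes "cmod s \<le> a" "cmod t \<le> b" "cmod l = 1" "s + l * t = complex_of_real (a + b)"
  shows "s = complex_of_real a" "cmod t = b"
proof -
  have "Re s + Re (l * t) = a + b" using arg_cong[OF assms(4), of Re] by simp
  moreover have "Re s \<le> a" using complex_Re_le_cmod[of s] assms(1) by linarith
  moreover have "Re (l * t) \<le> cmod t"
    using complex_Re_le_cmod[of "l * t"] assms(3) by (simp add: norm_mult)
  ultimately have Re_s: "Re s = a" and "cmod t = b" using assms(2) by linarith+
  thus "cmod t = b" by simp
  have "(Re s)\<^sup>2 + (Im s)\<^sup>2 \<le> a\<^sup>2"
    using assms(1) norm_ge_zero power_mono by (metis cmod_power2)
  hence "Im s = 0" using Re_s by simp
  thus "s = complex_of_real a" using Re_s by (simp add: complex_eq_iff)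
qed

lemma eq_smult_if_cinner_eq_norm_bound:
  assumes u: "u \<in> carrier_vec n" and v: "v \<in> carrier_vec n" and "vnorm v = 1"
    and "vnorm u \<le> a" and uv: "cinner v u = complex_of_real a"
  shows "u = complex_of_real a \<cdot>\<^sub>v v"
proof -
  define w where "w = u - complex_of_real a \<cdot>\<^sub>v v"
  have w: "w \<in> carrier_vec n" using u v by (simp add: w_def)
  have vu: "cinner u v = complex_of_real a" using cinner_commute[OF v u] uv by simp
  have vv: "cinner v v = 1" using \<open>vnorm v = 1\<close> by (simp add: cinner_self)
  \<comment> \<open>equality case of Cauchy-Schwarz: the distance from u to a v is sqrt (vnorm u ^ 2 - a ^ 2)\<close>
  have "cinner w w = cinner u u - complex_of_real (a\<^sup>2)"
    unfolding w_def using u v uv vu vv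
    by (simp add: cinner_diff_left cinner_diff_right[of _ n] cinner_smult_left cinner_smult_right
        power2_eq_square)
  hence "(vnorm w)\<^sup>2 = (vnorm u)\<^sup>2 - a\<^sup>2"
    unfolding cinner_self of_real_diff[symmetric] of_real_eq_iff .
  moreover have "(vnorm u)\<^sup>2 \<le> a\<^sup>2" using assms(4) vnorm_nonneg power_mono by blast
  ultimately have "(vnorm w)\<^sup>2 \<le> 0" by simp
  hence "vnorm w = 0" by simp
  hence "w = 0\<^sub>v n" using vnorm_eq_0_iff[OF w] by blast
  show ?thesis
  proof (rule eq_vecI)
    fix i assume "i < dim_vec (complex_of_real a \<cdot>\<^sub>v v)"
    hence "i < n" using v by simp
    hence "w $ i = 0" using \<open>w = 0\<^sub>v n\<close> by simp
    thus "u $ i = (complex_of_real a \<cdot>\<^sub>v v) $ i" using u v \<open>i < n\<close> by (simp add: w_def)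
  qed (use u v in simp)
qed

definition norming_pair :: "complex mat \<Rightarrow> complex vec \<Rightarrow> complex vec \<Rightarrow> bool" where
  "norming_pair A x y \<longleftrightarrow> x \<in> carrier_vec (dim_row A) \<and> y \<in> carrier_vec (dim_col A) \<and>
     vnorm x = 1 \<and> vnorm y = 1 \<and> complex_of_real (opnorm A) = sform x A y"

lemma norming_pair_exists:
  assumes M: "M \<in> carrier_mat m n" and "0 < n" and pos: "0 < opnorm M"
  shows "\<exists>x y. norming_pair M x y"
proof -
  obtain y where y: "y \<in> carrier_vec n" "vnorm y = 1" "vnorm (M *\<^sub>v y) = opnorm M"
    using opnorm_attained[OF M \<open>0 < n\<close>] by blast
  define x where "x = complex_of_real (1 / opnorm M) \<cdot>\<^sub>v (M *\<^sub>v y)"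
  have "cinner x (M *\<^sub>v y) = complex_of_real (1 / opnorm M * (opnorm M)\<^sup>2)"
    by (simp add: x_def cinner_smult_left cinner_self y(3))
  hence "complex_of_real (opnorm M) = sform x M y"
    using pos by (simp add: sform_eq_cinner power2_eq_square)
  moreover have "vnorm x = 1" using pos y by (simp add: x_def vnorm_smult norm_divide)
  ultimately have "norming_pair M x y"
    using M y by (simp add: norming_pair_def x_def)
  thus ?thesis by blast
qed

lemma norming_pair_singular_vectors:
  assumes A: "A \<in> carrier_mat m n" and "0 < n" and "norming_pair A x y"
  shows "A *\<^sub>v y = complex_of_real (opnorm A) \<cdot>\<^sub>v x"
    and "adj A *\<^sub>v x = complex_of_real (opnorm A) \<cdot>\<^sub>v y"
proof -
  have x: "x \<in> carrier_vec m" "vnorm x = 1" and y: "y \<in> carrier_vec n" "vnorm y = 1"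
    and xy: "cinner x (A *\<^sub>v y) = complex_of_real (opnorm A)"
    using assms by (auto simp: norming_pair_def sform_eq_cinner)
  show "A *\<^sub>v y = complex_of_real (opnorm A) \<cdot>\<^sub>v x"
    using eq_smult_if_cinner_eq_norm_bound[OF _ x(1,2) _ xy] opnorm_bound[OF A y(1)] A y by simp
  have "cinner y (adj A *\<^sub>v x) = complex_of_real (opnorm A)"
    using cinner_commute[of "adj A *\<^sub>v x" n y] cinner_adj[OF A x(1) y(1)] xy A x y
    by (metis adj_carrier_mat complex_cnj_complex_of_real mult_mat_vec_carrier)
  thus "adj A *\<^sub>v x = complex_of_real (opnorm A) \<cdot>\<^sub>v y"
    using eq_smult_if_cinner_eq_norm_bound[OF _ y] adj_opnorm_bound[OF A x(1) \<open>0 < n\<close>] A x y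
    by (metis adj_carrier_mat mult_mat_vec_carrier mult_cancel_left2)
qed

lemma smult_mat_mult_vec:
  "A \<in> carrier_mat m n \<Longrightarrow> v \<in> carrier_vec n \<Longrightarrow> (c \<cdot>\<^sub>m A) *\<^sub>v v = c \<cdot>\<^sub>v (A *\<^sub>v v)"
  by (intro eq_vecI) (auto simp: mult_mat_vec_def scalar_prod_def sum_distrib_left mult.assoc)

lemma mult_add_smult_mat_vec:
  assumes "A \<in> carrier_mat m n" "B \<in> carrier_mat m n" "y \<in> carrier_vec n"
  shows "(A + l \<cdot>\<^sub>m B) *\<^sub>v y = A *\<^sub>v y + l \<cdot>\<^sub>v (B *\<^sub>v y)"
  using assms by (simp add: add_mult_distrib_mat_vec smult_mat_mult_vec)

lemma sform_add_smult:
  assumes "A \<in> carrier_mat m n" "B \<in> carrier_mat m n" "x \<in> carrier_vec m" "y \<in> carrier_vec n"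
  shows "sform x (A + l \<cdot>\<^sub>m B) y = sform x A y + l * sform x B y"
  using assms by (simp add: mult_add_smult_mat_vec sform_eq_cinner cinner_add_right[of _ m]
      cinner_smult_right)

lemma opnorm_add_smult_le:
  assumes A: "A \<in> carrier_mat m n" and B: "B \<in> carrier_mat m n" and "0 < n"
  shows "opnorm (A + l \<cdot>\<^sub>m B) \<le> opnorm A + cmod l * opnorm B"
proof -
  obtain y where y: "y \<in> carrier_vec n" "vnorm y = 1"
      "vnorm ((A + l \<cdot>\<^sub>m B) *\<^sub>v y) = opnorm (A + l \<cdot>\<^sub>m B)"
    using opnorm_attained[of "A + l \<cdot>\<^sub>m B" m n] A B \<open>0 < n\<close> by auto
  have "opnorm (A + l \<cdot>\<^sub>m B) \<le> vnorm (A *\<^sub>v y) + vnorm (l \<cdot>\<^sub>v (B *\<^sub>v y))"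
    using y mult_add_smult_mat_vec[OF A B y(1)] vnorm_add_le[of "A *\<^sub>v y" m "l \<cdot>\<^sub>v (B *\<^sub>v y)"] A B
    by simp
  also have "\<dots> \<le> opnorm A + cmod l * opnorm B"
    using opnorm_bound[OF A y(1)] opnorm_bound[OF B y(1)] y(2)
    by (simp add: vnorm_smult add_mono mult_left_mono)
  finally show ?thesis .
qed

lemma opnorm_parallel_iff_norming_pair:
  assumes A: "A \<in> carrier_mat m n" and B: "B \<in> carrier_mat m n" and "0 < n" and "0 < opnorm A"
  shows "opnorm_parallel A B \<longleftrightarrow> (\<exists>x y. norming_pair A x y \<and> cmod (sform x B y) = opnorm B)"
proof
  assume "opnorm_parallel A B"
  then obtain l where l: "cmod l = 1" "opnorm (A + l \<cdot>\<^sub>m B) = opnorm A + opnorm B"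
    unfolding opnorm_parallel_def by blast
  have "0 < opnorm (A + l \<cdot>\<^sub>m B)"
    using l(2) \<open>0 < opnorm A\<close> opnorm_nonneg[OF B \<open>0 < n\<close>] by linarith
  then obtain x y where xy: "norming_pair (A + l \<cdot>\<^sub>m B) x y"
    using norming_pair_exists[of "A + l \<cdot>\<^sub>m B" m n] A B \<open>0 < n\<close> by auto
  hence x: "x \<in> carrier_vec m" "vnorm x = 1" and y: "y \<in> carrier_vec n" "vnorm y = 1"
    using B by (auto simp: norming_pair_def)
  have "sform x A y + l * sform x B y = complex_of_real (opnorm A + opnorm B)"
    using xy l(2) sform_add_smult[OF A B x(1) y(1)] by (simp add: norming_pair_def)
  from add_eq_sum_of_norm_bounds[OF cmod_sform_le_opnorm[OF A x(1) y(1) x(2) y(2)]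
      cmod_sform_le_opnorm[OF B x(1) y(1) x(2) y(2)] l(1) this]
  have "norming_pair A x y" "cmod (sform x B y) = opnorm B"
    using A x y by (auto simp: norming_pair_def)
  thus "\<exists>x y. norming_pair A x y \<and> cmod (sform x B y) = opnorm B" by blast
next
  assume "\<exists>x y. norming_pair A x y \<and> cmod (sform x B y) = opnorm B"
  then obtain x y where xy: "norming_pair A x y" and Bxy: "cmod (sform x B y) = opnorm B"
    by blast
  hence x: "x \<in> carrier_vec m" "vnorm x = 1" and y: "y \<in> carrier_vec n" "vnorm y = 1"
    using A by (auto simp: norming_pair_def)
  obtain l where l: "cmod l = 1" "l * sform x B y = complex_of_real (opnorm B)"
    using unimodular_rotation[of "sform x B y"] Bxy by auto
  have "sform x (A + l \<cdot>\<^sub>m B) y = complex_of_real (opnorm A + opnorm B)"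
    using xy l(2) sform_add_smult[OF A B x(1) y(1)] by (simp add: norming_pair_def)
  hence "opnorm A + opnorm B \<le> opnorm (A + l \<cdot>\<^sub>m B)"
    using cmod_sform_le_opnorm[of "A + l \<cdot>\<^sub>m B" m n, OF _ x(1) y(1) x(2) y(2)] A B
      opnorm_nonneg[OF B \<open>0 < n\<close>] \<open>0 < opnorm A\<close> by (simp del: of_real_add)
  hence "opnorm (A + l \<cdot>\<^sub>m B) = opnorm A + opnorm B"
    using opnorm_add_smult_le[OF A B \<open>0 < n\<close>, of l] l(1) by simp
  thus "opnorm_parallel A B" using l(1) unfolding opnorm_parallel_def by blast
qed
section \<open>The top eigenspace of A A^*\<close>

lemma cinner_mult_adj_self:
  assumes A: "A \<in> carrier_mat m n" and x: "x \<in> carrier_vec m"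
  shows "cinner x ((A * adj A) *\<^sub>v x) = complex_of_real ((vnorm (adj A *\<^sub>v x))\<^sup>2)"
proof -
  have "adj A *\<^sub>v x \<in> carrier_vec n" using A x by (metis adj_carrier_mat mult_mat_vec_carrier)
  thus ?thesis using cinner_adj[OF A x] assoc_mult_mat_vec[OF A adj_carrier_mat[OF A] x]
    by (simp add: cinner_self)
qed

lemma eigenvalue_mult_adj_le:
  assumes A: "A \<in> carrier_mat m n" and "0 < n" and "eigenvalue (A * adj A) e"
  shows "Re e \<le> (opnorm A)\<^sup>2"
proof -
  obtain v where v: "v \<in> carrier_vec m" "v \<noteq> 0\<^sub>v m" "(A * adj A) *\<^sub>v v = e \<cdot>\<^sub>v v"
    using assms A unfolding eigenvalue_def eigenvector_def by auto
  have "0 < vnorm v" using v vnorm_eq_0_iff[OF v(1)] vnorm_nonneg[of v] by force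
  have eq: "complex_of_real ((vnorm (adj A *\<^sub>v v))\<^sup>2) = e * complex_of_real ((vnorm v)\<^sup>2)"
    using cinner_mult_adj_self[OF A v(1)] v by (simp add: cinner_smult_right cinner_self)
  have "Re e * (vnorm v)\<^sup>2 = (vnorm (adj A *\<^sub>v v))\<^sup>2"
    using arg_cong[OF eq, of Re] by (simp del: of_real_power)
  also have "\<dots> \<le> (opnorm A)\<^sup>2 * (vnorm v)\<^sup>2"
    using adj_opnorm_bound[OF A v(1) \<open>0 < n\<close>] vnorm_nonneg
    by (simp add: power_mono flip: power_mult_distrib)
  finally show ?thesis using \<open>0 < vnorm v\<close> by simp
qed

lemma norming_pair_iff_top_eigenvector:
  assumes A: "A \<in> carrier_mat m n" and "0 < n" and pos: "0 < opnorm A"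
  shows "norming_pair A x y \<longleftrightarrow>
    x \<in> eigenspace (A * adj A) (complex_of_real ((opnorm A)\<^sup>2)) \<and> vnorm x = 1 \<and>
    y = complex_of_real (1 / opnorm A) \<cdot>\<^sub>v (adj A *\<^sub>v x)"
proof
  assume xy: "norming_pair A x y"
  hence x: "x \<in> carrier_vec m" "vnorm x = 1" and y: "y \<in> carrier_vec n"
    using A by (auto simp: norming_pair_def)
  note sv = norming_pair_singular_vectors[OF A \<open>0 < n\<close> xy]
  have "(A * adj A) *\<^sub>v x = complex_of_real ((opnorm A)\<^sup>2) \<cdot>\<^sub>v x"
    using assoc_mult_mat_vec[OF A adj_carrier_mat[OF A] x(1)] sv A y
    by (simp add: mult_mat_vec smult_smult_assoc power2_eq_square)
  moreover have "y = complex_of_real (1 / opnorm A) \<cdot>\<^sub>v (adj A *\<^sub>v x)"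
    using sv(2) pos y by (simp add: smult_smult_assoc)
  ultimately show "x \<in> eigenspace (A * adj A) (complex_of_real ((opnorm A)\<^sup>2)) \<and> vnorm x = 1 \<and>
    y = complex_of_real (1 / opnorm A) \<cdot>\<^sub>v (adj A *\<^sub>v x)"
    using x A by (simp add: eigenspace_def)
next
  assume "x \<in> eigenspace (A * adj A) (complex_of_real ((opnorm A)\<^sup>2)) \<and> vnorm x = 1 \<and>
    y = complex_of_real (1 / opnorm A) \<cdot>\<^sub>v (adj A *\<^sub>v x)"
  hence x: "x \<in> carrier_vec m" "vnorm x = 1"
    and Mx: "(A * adj A) *\<^sub>v x = complex_of_real ((opnorm A)\<^sup>2) \<cdot>\<^sub>v x"
    and y: "y = complex_of_real (1 / opnorm A) \<cdot>\<^sub>v (adj A *\<^sub>v x)"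
    using A by (auto simp: eigenspace_def)
  have Ax_carrier: "adj A *\<^sub>v x \<in> carrier_vec n"
    using A x by (metis adj_carrier_mat mult_mat_vec_carrier)
  have "cinner x ((A * adj A) *\<^sub>v x) = complex_of_real ((opnorm A)\<^sup>2)"
    using Mx x by (simp add: cinner_smult_right cinner_self)
  hence Ax: "vnorm (adj A *\<^sub>v x) = opnorm A"
    using cinner_mult_adj_self[OF A x(1)] vnorm_nonneg pos
    by (simp add: power2_eq_iff_nonneg del: of_real_power)
  have "sform x A y = complex_of_real (1 / opnorm A) * cinner x ((A * adj A) *\<^sub>v x)"
    using assoc_mult_mat_vec[OF A adj_carrier_mat[OF A] x(1)] A x Ax_carrier
    by (simp add: y sform_eq_cinner mult_mat_vec cinner_smult_right)
  also have "\<dots> = complex_of_real (opnorm A)"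
    using Ax pos by (simp add: cinner_mult_adj_self[OF A x(1)] power2_eq_square)
  finally show "norming_pair A x y"
    using A x Ax Ax_carrier pos by (simp add: norming_pair_def y vnorm_smult norm_divide)
qed

lemma largest_eigenvalue_mult_adj:
  assumes A: "A \<in> carrier_mat m n" and "0 < n" and pos: "0 < opnorm A"
  shows "largest_eigenvalue (A * adj A) = (opnorm A)\<^sup>2"
proof -
  have M: "A * adj A \<in> carrier_mat m m" using A by simp
  have "finite {e. eigenvalue (A * adj A) e}"
    using eigenvalue_root_char_poly[OF M] poly_roots_finite[of "char_poly (A * adj A)"]
      degree_monic_char_poly[OF M] by fastforce
  moreover obtain x y where "norming_pair A x y"
    using norming_pair_exists[OF A \<open>0 < n\<close> pos] by blast
  hence "eigenvalue (A * adj A) (complex_of_real ((opnorm A)\<^sup>2))"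
    using norming_pair_iff_top_eigenvector[OF A \<open>0 < n\<close> pos] vnorm_zero_vec M
    by (auto simp: eigenvalue_def eigenvector_def eigenspace_def)
  ultimately show ?thesis
    unfolding largest_eigenvalue_def
    using eigenvalue_mult_adj_le[OF A \<open>0 < n\<close>] by (intro Max_eqI) force+
qed

lemma eigenspace_eq_mat_kernel:
  assumes M: "M \<in> carrier_mat n n"
  shows "eigenspace M e = mat_kernel (char_matrix M e)"
proof -
  have C: "char_matrix M e \<in> carrier_mat n n" using M by simp
  have "v \<in> eigenspace M e \<longleftrightarrow> v \<in> carrier_vec n \<and> char_matrix M e *\<^sub>v v = 0\<^sub>v n" for v
  proof (cases "v = 0\<^sub>v n")
    case True
    have "M *\<^sub>v 0\<^sub>v n = 0\<^sub>v n" "char_matrix M e *\<^sub>v 0\<^sub>v n = 0\<^sub>v n"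
      using M carrier_matD[OF C] by (auto intro!: eq_vecI)
    thus ?thesis using True M by (auto simp: eigenspace_def)
  next
    case False
    thus ?thesis using eigenvector_char_matrix[OF M, of v e] M
      by (auto simp: eigenspace_def eigenvector_def)
  qed
  thus ?thesis using carrier_matD[OF C] by (auto simp: mat_kernel_def)
qed

section \<open>Orthonormal bases and the numerical range\<close>

context vec_space
begin

lemma mat_of_cols_range_eq_span:
  assumes us: "set us \<subseteq> carrier_vec n"
  shows "{mat_of_cols n us *\<^sub>v c | c. c \<in> carrier_vec (length us)} = span (set us)"
proof -
  have "mat_of_cols n us *\<^sub>v vec (length us) f = lincomb_list f us" for f
    using lincomb_list_as_mat_mult[of us f] us by (auto simp: carrier_vecD subsetD)
  hence "{mat_of_cols n us *\<^sub>v c | c. c \<in> carrier_vec (length us)} = span_list us"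
    unfolding span_list_def
    by (metis (no_types, opaque_lifting) vec_carrier carrier_vecD eq_vecI index_vec)
  thus ?thesis using span_list_as_span[OF us] by simp
qed

lemma span_map_smult:
  assumes us: "set us \<subseteq> carrier_vec n" and nonzero: "\<forall>u\<in>set us. c u \<noteq> 0"
  shows "span (set (map (\<lambda>u. c u \<cdot>\<^sub>v u) us)) = span (set us)"
proof
  have ws: "set (map (\<lambda>u. c u \<cdot>\<^sub>v u) us) \<subseteq> carrier_vec n" using us by auto
  show "span (set (map (\<lambda>u. c u \<cdot>\<^sub>v u) us)) \<subseteq> span (set us)"
  proof (rule span_subsetI[OF us], rule subsetI)
    fix w assume "w \<in> set (map (\<lambda>u. c u \<cdot>\<^sub>v u) us)"
    then obtain u where u: "u \<in> set us" and w: "w = c u \<cdot>\<^sub>v u" by auto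
    show "w \<in> span (set us)" unfolding w by (rule smult_in_span[OF us span_mem[OF us u]])
  qed
  show "span (set us) \<subseteq> span (set (map (\<lambda>u. c u \<cdot>\<^sub>v u) us))"
  proof (rule span_subsetI[OF ws], rule subsetI)
    fix u assume u: "u \<in> set us"
    hence "c u \<cdot>\<^sub>v u \<in> span (set (map (\<lambda>u. c u \<cdot>\<^sub>v u) us))" using span_mem[OF ws] by simp
    hence "inverse (c u) \<cdot>\<^sub>v (c u \<cdot>\<^sub>v u) \<in> span (set (map (\<lambda>u. c u \<cdot>\<^sub>v u) us))"
      by (rule smult_in_span[OF ws])
    thus "u \<in> span (set (map (\<lambda>u. c u \<cdot>\<^sub>v u) us))"
      using nonzero u by (simp add: smult_smult_assoc)
  qed
qed

end

lemma ex_orthonormal_basis_mat_kernel: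
  assumes N: "N \<in> carrier_mat m n"
  shows "\<exists>k U. U \<in> carrier_mat n k \<and> orthonormal_basis_mat U (mat_kernel N)"
proof -
  interpret K: kernel m n N using N by (simp add: kernel_def)
  obtain Bs where "finite Bs" "K.basis Bs" using kernel_basis_exists[OF N] by blast
  moreover obtain ws where ws: "set ws = Bs" "distinct ws"
    using finite_distinct_list[OF \<open>finite Bs\<close>] by blast
  ultimately have ws_carrier: "set ws \<subseteq> carrier_vec n" and "\<not> K.NC.lin_dep (set ws)"
    and span_ws: "K.NC.span (set ws) = mat_kernel N"
    using K.lindep_same K.span_same mat_kernel_carrier[OF N] unfolding K.Ker.basis_def by auto
  define us where "us = gram_schmidt n ws"
  have us: "set us \<subseteq> carrier_vec n" "corthogonal us" "K.NC.span (set us) = mat_kernel N"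
    using cof_vec_space.gram_schmidt_result[OF ws_carrier \<open>distinct ws\<close> \<open>\<not> K.NC.lin_dep (set ws)\<close>]
      span_ws by (auto simp: us_def)
  define k where "k = length us"
  have us_i: "us ! i \<in> carrier_vec n" "vnorm (us ! i) \<noteq> 0" if "i < k" for i
  proof -
    show carrier: "us ! i \<in> carrier_vec n" using that us(1) by (auto simp: k_def)
    show "vnorm (us ! i) \<noteq> 0"
      using corthogonalD[OF us(2), of i i] that cinner_eq_cscalar_prod[OF carrier carrier]
      by (auto simp: k_def cinner_self)
  qed
  define vs where "vs = map (\<lambda>u. complex_of_real (1 / vnorm u) \<cdot>\<^sub>v u) us"
  define U where "U = mat_of_cols n vs"
  have vs: "set vs \<subseteq> carrier_vec n" "length vs = k" using us(1) by (auto simp: vs_def k_def)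
  have U: "U \<in> carrier_mat n k" using vs mat_of_cols_carrier(1)[of n vs] by (simp add: U_def)
  have UU: "adj U * U = 1\<^sub>m k"
  proof (rule eq_matI)
    fix i j assume "i < dim_row (1\<^sub>m k)" "j < dim_col (1\<^sub>m k)"
    hence ij: "i < k" "j < k" by auto
    have "(adj U * U) $$ (i, j) = cinner (col U i) (col U j)"
      using U ij by (auto simp: cinner_def scalar_prod_def atLeast0LessThan intro!: sum.cong)
    also have "\<dots> = cinner (vs ! i) (vs ! j)"
      using ij vs by (simp add: U_def col_mat_of_cols subset_code(1))
    also have "\<dots> = 1\<^sub>m k $$ (i, j)"
    proof (cases "i = j")
      case True
      thus ?thesis using us_i[OF ij(1)] ij
        by (simp add: vs_def k_def cinner_self vnorm_smult norm_divide vnorm_nonneg)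
    next
      case False
      hence "cinner (us ! i) (us ! j) = 0"
        using corthogonalD[OF us(2), of j i] ij us_i[OF ij(1)] us_i[OF ij(2)]
        by (simp add: k_def cinner_eq_cscalar_prod)
      thus ?thesis using False ij us_i[OF ij(1)] us_i[OF ij(2)]
        by (simp add: vs_def k_def cinner_smult_left cinner_smult_right)
    qed
    finally show "(adj U * U) $$ (i, j) = 1\<^sub>m k $$ (i, j)" .
  qed (use U in auto)
  have "{U *\<^sub>v c | c. c \<in> carrier_vec k} = K.NC.span (set vs)"
    using K.NC.mat_of_cols_range_eq_span[OF vs(1)] unfolding U_def vs(2) .
  also have "\<dots> = K.NC.span (set us)"
    unfolding vs_def
    by (rule K.NC.span_map_smult[OF us(1)]) (use us_i(2) in \<open>auto simp: k_def in_set_conv_nth\<close>)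
  finally have "{U *\<^sub>v c | c. c \<in> carrier_vec k} = mat_kernel N"
    using us(3) by simp
  thus ?thesis
    using U UU unfolding orthonormal_basis_mat_def by (intro exI[of _ k] exI[of _ U]) simp
qed

lemma ex_norming_pair_in_orthonormal_basis:
  assumes A: "A \<in> carrier_mat m n" and "0 < n" and pos: "0 < opnorm A"
    and U: "U \<in> carrier_mat m k"
    and onb: "orthonormal_basis_mat U (eigenspace (A * adj A) (complex_of_real ((opnorm A)\<^sup>2)))"
  shows "(\<exists>x y. norming_pair A x y \<and> P x y) \<longleftrightarrow>
    (\<exists>c\<in>carrier_vec k. vnorm c = 1 \<and>
       P (U *\<^sub>v c) (((1 / complex_of_real (opnorm A)) \<cdot>\<^sub>m (adj A * U)) *\<^sub>v c))"
proof -
  have UU: "adj U * U = 1\<^sub>m k"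
    and range: "{U *\<^sub>v c | c. c \<in> carrier_vec k} =
      eigenspace (A * adj A) (complex_of_real ((opnorm A)\<^sup>2))"
    using onb U unfolding orthonormal_basis_mat_def by auto
  have V: "((1 / complex_of_real (opnorm A)) \<cdot>\<^sub>m (adj A * U)) *\<^sub>v c =
      complex_of_real (1 / opnorm A) \<cdot>\<^sub>v (adj A *\<^sub>v (U *\<^sub>v c))" if "c \<in> carrier_vec k" for c
    using smult_mat_mult_vec[OF mult_carrier_mat[OF adj_carrier_mat[OF A] U] that]
      assoc_mult_mat_vec[OF adj_carrier_mat[OF A] U that] by simp
  have "norming_pair A x y \<longleftrightarrow> (\<exists>c\<in>carrier_vec k. vnorm c = 1 \<and> x = U *\<^sub>v c \<and>
      y = ((1 / complex_of_real (opnorm A)) \<cdot>\<^sub>m (adj A * U)) *\<^sub>v c)" for x y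
    unfolding norming_pair_iff_top_eigenvector[OF A \<open>0 < n\<close> pos] range[symmetric]
    using vnorm_isometry[OF U UU] V by auto
  thus ?thesis by auto
qed

lemma sform_compression:
  assumes U: "U \<in> carrier_mat m k" and B: "B \<in> carrier_mat m n" and V: "V \<in> carrier_mat n k"
    and c: "c \<in> carrier_vec k"
  shows "sform c (l \<cdot>\<^sub>m (adj U * B * V)) c = l * sform (U *\<^sub>v c) B (V *\<^sub>v c)"
proof -
  have UB: "adj U * B \<in> carrier_mat k n" using mult_carrier_mat[OF adj_carrier_mat[OF U] B] .
  have "(l \<cdot>\<^sub>m (adj U * B * V)) *\<^sub>v c = l \<cdot>\<^sub>v (adj U *\<^sub>v (B *\<^sub>v (V *\<^sub>v c)))"
    using smult_mat_mult_vec[OF mult_carrier_mat[OF UB V] c] assoc_mult_mat_vec[OF UB V c]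
      assoc_mult_mat_vec[OF adj_carrier_mat[OF U] B mult_mat_vec_carrier[OF V c]] by simp
  moreover have "adj U *\<^sub>v (B *\<^sub>v (V *\<^sub>v c)) \<in> carrier_vec (dim_vec c)"
    using U B V c by (metis adj_carrier_mat mult_mat_vec_carrier carrier_vecD)
  ultimately show ?thesis
    using cinner_adj[OF adj_carrier_mat[OF U] c, of "B *\<^sub>v (V *\<^sub>v c)"] U B V c
    by (simp add: sform_eq_cinner cinner_smult_right)
qed

lemma unimodular_mult_eq_minus_iff:
  assumes "0 \<le> r"
  shows "(\<exists>l. cmod l = 1 \<and> l * t = - complex_of_real r) \<longleftrightarrow> cmod t = r"
proof
  assume "\<exists>l. cmod l = 1 \<and> l * t = - complex_of_real r"
  then obtain l where "cmod l = 1" "l * t = - complex_of_real r" by blast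
  hence "cmod t = cmod (- complex_of_real r)" by (metis norm_mult mult_1)
  thus "cmod t = r" using assms by simp
next
  assume "cmod t = r"
  obtain l where "cmod l = 1" "l * - t = complex_of_real (cmod (- t))"
    using unimodular_rotation by blast
  hence "l * t = - complex_of_real r" using \<open>cmod t = r\<close> by (simp add: minus_equation_iff)
  thus "\<exists>l. cmod l = 1 \<and> l * t = - complex_of_real r" using \<open>cmod l = 1\<close> by blast
qed

lemma norming_pair_iff_numerical_range:
  assumes A: "A \<in> carrier_mat m n" and B: "B \<in> carrier_mat m n" and "0 < n" and pos: "0 < opnorm A"
    and U: "U \<in> carrier_mat m k"
    and onb: "orthonormal_basis_mat U (eigenspace (A * adj A) (complex_of_real ((opnorm A)\<^sup>2)))"
  defines "V \<equiv> (1 / complex_of_real (opnorm A)) \<cdot>\<^sub>m (adj A * U)"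
  shows "(\<exists>x y. norming_pair A x y \<and> cmod (sform x B y) = opnorm B) \<longleftrightarrow>
    (\<exists>l. cmod l = 1 \<and> - complex_of_real (opnorm B) \<in> numerical_range (l \<cdot>\<^sub>m (adj U * B * V)))"
proof -
  have V: "V \<in> carrier_mat n k"
    unfolding V_def by (intro smult_carrier_mat mult_carrier_mat[OF adj_carrier_mat[OF A] U])
  have range: "numerical_range (l \<cdot>\<^sub>m (adj U * B * V)) =
      (\<lambda>c. l * sform (U *\<^sub>v c) B (V *\<^sub>v c)) ` {c \<in> carrier_vec k. vnorm c = 1}" for l
  proof -
    have "numerical_range (l \<cdot>\<^sub>m (adj U * B * V)) =
        (\<lambda>c. sform c (l \<cdot>\<^sub>m (adj U * B * V)) c) ` {c \<in> carrier_vec k. vnorm c = 1}"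
      using V unfolding numerical_range_def by auto
    also have "\<dots> = (\<lambda>c. l * sform (U *\<^sub>v c) B (V *\<^sub>v c)) ` {c \<in> carrier_vec k. vnorm c = 1}"
      using sform_compression[OF U B V] by (intro image_cong) auto
    finally show ?thesis .
  qed
  have "(\<exists>l. cmod l = 1 \<and> - complex_of_real (opnorm B) \<in> numerical_range (l \<cdot>\<^sub>m (adj U * B * V))) \<longleftrightarrow>
    (\<exists>c\<in>carrier_vec k. vnorm c = 1 \<and>
      (\<exists>l. cmod l = 1 \<and> l * sform (U *\<^sub>v c) B (V *\<^sub>v c) = - complex_of_real (opnorm B)))"
    unfolding range by (force simp: image_iff)
  also have "\<dots> \<longleftrightarrow> (\<exists>c\<in>carrier_vec k. vnorm c = 1 \<and> cmod (sform (U *\<^sub>v c) B (V *\<^sub>v c)) = opnorm B)"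
    using unimodular_mult_eq_minus_iff[OF opnorm_nonneg[OF B \<open>0 < n\<close>]] by simp
  finally show ?thesis
    unfolding ex_norming_pair_in_orthonormal_basis[OF A \<open>0 < n\<close> pos U onb] V_def by simp
qed

theorem proposition3p1:
  fixes A B :: "complex mat" and n :: nat
  assumes "A \<in> carrier_mat n n" and "B \<in> carrier_mat n n" and "A \<noteq> 0\<^sub>m n n"
  shows "(opnorm_parallel A B \<longleftrightarrow>
          (\<exists>x y. x \<in> carrier_vec n \<and> y \<in> carrier_vec n \<and> vnorm x = 1 \<and> vnorm y = 1 \<and>
                 complex_of_real (opnorm A) = sform x A y \<and> cmod (sform x B y) = opnorm B))
       \<and> (opnorm_parallel A B \<longleftrightarrow>
          (\<forall>U k. U \<in> carrier_mat n k \<longrightarrow>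
              orthonormal_basis_mat U
                (eigenspace (A * adj A) (complex_of_real (largest_eigenvalue (A * adj A)))) \<longrightarrow>
              (let V = (1 / complex_of_real (opnorm A)) \<cdot>\<^sub>m (adj A * U) in
               \<exists>l. cmod l = 1 \<and>
                  - complex_of_real (opnorm B) \<in> numerical_range (l \<cdot>\<^sub>m (adj U * B * V)))))"
proof -
  note A = assms(1) and B = assms(2)
  have "0 < n" using nonzero_mat_entry[OF A assms(3)] by (metis not_gr0 not_less_zero)
  have pos: "0 < opnorm A" using opnorm_pos[OF A assms(3)] .
  have M: "A * adj A \<in> carrier_mat n n" using A by simp
  have top: "largest_eigenvalue (A * adj A) = (opnorm A)\<^sup>2"
    using largest_eigenvalue_mult_adj[OF A \<open>0 < n\<close> pos] .
  \<comment> \<open>(iii) quantifies over all U, so deriving (ii) from it needs one such U to exist\<close>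
  obtain k0 U0 where U0: "U0 \<in> carrier_mat n k0"
    "orthonormal_basis_mat U0 (eigenspace (A * adj A) (complex_of_real ((opnorm A)\<^sup>2)))"
    using ex_orthonormal_basis_mat_kernel[OF char_matrix_closed[OF M]]
    unfolding eigenspace_eq_mat_kernel[OF M] by blast
  note iii = norming_pair_iff_numerical_range[OF A B \<open>0 < n\<close> pos]
  have ii: "(\<exists>x y. x \<in> carrier_vec n \<and> y \<in> carrier_vec n \<and> vnorm x = 1 \<and> vnorm y = 1 \<and>
                 complex_of_real (opnorm A) = sform x A y \<and> cmod (sform x B y) = opnorm B) \<longleftrightarrow>
    (\<exists>x y. norming_pair A x y \<and> cmod (sform x B y) = opnorm B)"
    using A by (simp add: norming_pair_def)
  show ?thesis
    unfolding ii opnorm_parallel_iff_norming_pair[OF A B \<open>0 < n\<close> pos] top Let_def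
    using iii U0 iii[OF U0] by blast
qed

end
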